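(* Let $\pi$ be a (not necessarily unique) QSD of $(X_t)_{0\le t<\tau_\partial}$, $\lambda=\lambda(\pi)$, and assume the reverse anti-Dobrushin condition (RaD) holds with time $t_2>0$ and constant $C_2'<\infty$. Set $C_2:=\lambda^{t_2}C_2'$. Then $$P_{t_2}(x,\cdot)\le C_2\,\pi(\cdot)\quad\text{for every }x\in\chi .$$
   Context: $\chi$ is a metric space with Borel $\sigma$-algebra; $\partial\notin\chi$ is a cemetery point. $(X_t)_{0\le t<\tau_\partial}$ is a killed Markov process on $\chi$ in discrete or continuous time, absorption time $\tau_\partial=\inf\{t\ge0:X_t=\partial\}$, submarkovian semigroup $P_t(x,A)=\mathbb P_x(X_t\in A,\tau_\partial>t)$; $K1(x)=K(x,\chi)$ for a kernel $K$. A QSD is a probability measure $\pi$ with $\mathbb P_\pi(X_t\in\cdot\mid\tau_\partial>t)=\pi$ for all $t$; $\lambda(\pi):=\mathbb P_\pi(\tau_\partial>1)$. A submarkovian kernel $K$ is lower semicontinuous if $Kf$ is lower semicontinuous for every bounded continuous $f\ge0$. $\mathrm{spt}(\pi)$ denotes the support. Reverse anti-Dobrushin condition (RaD): there exist a time $t_2>0$ and a submarkovian kernel $R^{(2)}$ with $\pi(dx)P_{t_2}(x,dy)=\pi(dy)R^{(2)}(y,dx)$ as measures on $\chi\times\chi$, and $C_2'<\infty$ with $R^{(2)}(y,\cdot)/R^{(2)}1(y)\le C_2'\pi(\cdot)$ for $\pi$-a.e. $y$; moreover $\mathrm{spt}(\pi)=\chi$ and $P_{t_2}$ is lower semicontinuous.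 *)

theory Defs
  imports "HOL-Analysis.Analysis" "HOL-Probability.Probability"
begin

definition lsc_fun :: "('a::topological_space \<Rightarrow> real) \<Rightarrow> bool" where
  "lsc_fun g \<longleftrightarrow> (\<forall>c. open {x. c < g x})"

definition lsc_kernel :: "('a::topological_space \<Rightarrow> 'a measure) \<Rightarrow> bool" where
  "lsc_kernel K \<longleftrightarrow>
     (\<forall>f::'a \<Rightarrow> real. continuous_on UNIV f \<longrightarrow> bounded (range f) \<longrightarrow> (\<forall>x. 0 \<le> f x) \<longrightarrow>
        lsc_fun (\<lambda>x. \<integral>y. f y \<partial>(K x)))"

definition spt :: "'a::topological_space measure \<Rightarrow> 'a set" where
  "spt \<mu> = {x. \<forall>U. open U \<longrightarrow> x \<in> U \<longrightarrow> 0 < emeasure \<mu> U}"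

definition joint :: "'a::topological_space measure \<Rightarrow> ('a \<Rightarrow> 'a measure) \<Rightarrow> ('a \<times> 'a) measure" where
  "joint \<mu> K = \<mu> \<bind> (\<lambda>x. distr (K x) (borel \<Otimes>\<^sub>M borel) (\<lambda>y. (x, y)))"

text \<open>Submarkovian semigroup (P_t) indexed by the time set T (T = \<nat> or T = [0,\<infinity>)).\<close>
definition submarkov_semigroup :: "real set \<Rightarrow> (real \<Rightarrow> 'a::topological_space \<Rightarrow> 'a measure) \<Rightarrow> bool" where
  "submarkov_semigroup T P \<longleftrightarrow>
     (\<forall>t\<in>T. P t \<in> borel \<rightarrow>\<^sub>M subprob_algebra borel) \<and>
     (\<forall>x. P 0 x = return borel x) \<and>
     (\<forall>s\<in>T. \<forall>t\<in>T. \<forall>x. P (s + t) x = P s x \<bind> P t)"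

text \<open>Quasi-stationary distribution: P_\<pi>(X_t \<in> A | \<tau> > t) = \<pi>(A); the conditioning
  requires P_\<pi>(\<tau> > t) > 0.\<close>
definition is_QSD :: "real set \<Rightarrow> (real \<Rightarrow> 'a::topological_space \<Rightarrow> 'a measure) \<Rightarrow> 'a measure \<Rightarrow> bool" where
  "is_QSD T P \<pi> \<longleftrightarrow> prob_space \<pi> \<and> sets \<pi> = sets borel \<and>
     (\<forall>t\<in>T. 0 < (\<integral>x. measure (P t x) UNIV \<partial>\<pi>) \<and>
        (\<forall>A\<in>sets borel. (\<integral>x. measure (P t x) A \<partial>\<pi>) / (\<integral>x. measure (P t x) UNIV \<partial>\<pi>) = measure \<pi> A))"

definition lambda_QSD :: "(real \<Rightarrow> 'a::topological_space \<Rightarrow> 'a measure) \<Rightarrow> 'a measure \<Rightarrow> real" where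
  "lambda_QSD P \<pi> = (\<integral>x. measure (P 1 x) UNIV \<partial>\<pi>)"

end

theory Submission
  imports Defs
begin

text \<open>
  Integrating the reversal identity \<pi>(dx) P(x,dy) = \<pi>(dy) R(y,dx) over B \<times> A and bounding
  R(y,B) by C' R(y,\<chi>) \<pi>(B) gives
    \<integral>[B] P(x,A) \<pi>(dx) \<le> C' \<pi>(B) \<integral>[A] R(y,\<chi>) \<pi>(dy) = C' \<pi>(B) \<integral> P(x,A) \<pi>(dx) = \<lambda>^t C' \<pi>(B) \<pi>(A),
  the last step being the QSD property, whose survival factor is multiplicative in t and hence
  equals \<lambda>^t. So P is dominated by C \<pi> on \<pi>-average over every set B. For bounded continuous
  f \<ge> 0, P f is lower semicontinuous, so a point where P f > C \<pi>(f) would have an open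
  neighbourhood where this holds; it has positive mass since spt \<pi> = \<chi>, contradicting the
  averaged bound. The inequality for continuous f passes to open sets by approximating their
  indicators from below and to Borel sets by outer regularity.
\<close>

section \<open>Outer regularity of finite Borel measures on metric spaces\<close>

definition outer_approximable :: "'a::topological_space measure \<Rightarrow> 'a set \<Rightarrow> bool" where
  "outer_approximable M A \<longleftrightarrow> (\<forall>e>0. \<exists>U. open U \<and> A \<subseteq> U \<and> measure M (U - A) < e)"

lemma outer_approximable_open: "open A \<Longrightarrow> outer_approximable M A"
  unfolding outer_approximable_def by auto

lemma outer_approximable_closed:
  fixes M :: "'a::metric_space measure"
  assumes "finite_measure M" and M: "sets M = sets borel" and F: "closed F"
  shows "outer_approximable M F"
  unfolding outer_approximable_def
proof (intro allI impI)
  fix e :: real assume e: "e > 0"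
  interpret finite_measure M by fact
  define U where "U n = (\<Union>y\<in>F. ball y (1 / Suc n))" for n :: nat
  have U_open: "open (U n)" for n unfolding U_def by auto
  have F_U: "F \<subseteq> U n" for n unfolding U_def by force
  have "decseq U" unfolding U_def decseq_def
  proof (intro allI impI)
    fix m n :: nat assume "m \<le> n"
    then have "1 / real (Suc n) \<le> 1 / Suc m" by (simp add: frac_le)
    then show "(\<Union>y\<in>F. ball y (1 / Suc n)) \<subseteq> (\<Union>y\<in>F. ball y (1 / Suc m))" by fastforce
  qed
  moreover have "(\<Inter>n. U n) = F"
  proof (intro equalityI subsetI)
    fix x assume x: "x \<in> (\<Inter>n. U n)"
    have "x \<in> closure F"
      unfolding closure_approachable
    proof (intro allI impI)
      fix d :: real assume "d > 0"
      then obtain n where n: "1 / Suc n < d" using nat_approx_posE by blast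
      from x obtain y where "y \<in> F" "dist y x < 1 / Suc n" unfolding U_def by (auto simp: dist_commute)
      then show "\<exists>y\<in>F. dist y x < d" using n by (meson less_trans)
    qed
    then show "x \<in> F" using F by (simp add: closure_closed)
  qed (use F_U in auto)
  ultimately have "(\<lambda>n. measure M (U n)) \<longlonglongrightarrow> measure M F"
    using finite_Lim_measure_decseq[of U] U_open M by force
  then have "eventually (\<lambda>n. measure M (U n) < measure M F + e) sequentially"
    using e by (intro order_tendstoD) auto
  then obtain n where n: "measure M (U n) < measure M F + e"
    by (auto simp: eventually_sequentially)
  have "measure M (U n - F) = measure M (U n) - measure M F"
    using F U_open M F_U by (intro finite_measure_Diff) auto
  then show "\<exists>U. open U \<and> F \<subseteq> U \<and> measure M (U - F) < e"
    using n U_open F_U by (intro exI[of _ "U n"]) auto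
qed

lemma outer_approximable_Union:
  fixes M :: "'a::topological_space measure" and A :: "nat \<Rightarrow> 'a set"
  assumes "finite_measure M" and M: "sets M = sets borel" and A: "\<And>i. A i \<in> sets borel"
    and approx: "\<And>i. outer_approximable M (A i)"
  shows "outer_approximable M (\<Union>i. A i)"
  unfolding outer_approximable_def
proof (intro allI impI)
  fix e :: real assume e: "e > 0"
  interpret finite_measure M by fact
  have "\<exists>U. open U \<and> A i \<subseteq> U \<and> measure M (U - A i) < e / 2 * (1/2)^Suc i" for i
  proof -
    have "0 < e / 2 * (1/2::real)^Suc i" using e by simp
    then show ?thesis using approx[of i] unfolding outer_approximable_def by blast
  qed
  then obtain U where U: "\<And>i. open (U i)" "\<And>i. A i \<subseteq> U i"
      "\<And>i. measure M (U i - A i) < e / 2 * (1/2)^Suc i"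
    by metis
  have U_A_sets: "U i - A i \<in> sets M" for i using U(1) A M by auto
  have geometric: "(\<lambda>i. e / 2 * (1/2)^Suc i) sums (e / 2)"
    using sums_mult[OF geometric_sums[of "1/2::real"], of "e/4"] by (simp add: power_Suc)
  have summable: "summable (\<lambda>i. measure M (U i - A i))"
    using U(3) by (intro summable_comparison_test[OF _ sums_summable[OF geometric]])
      (auto intro!: exI[of _ 0] less_imp_le)
  have "measure M ((\<Union>i. U i) - (\<Union>i. A i)) \<le> measure M (\<Union>i. U i - A i)"
    using U_A_sets by (intro finite_measure_mono) auto
  also have "\<dots> \<le> (\<Sum>i. measure M (U i - A i))"
    using U_A_sets summable by (intro finite_measure_subadditive_countably) auto
  also have "\<dots> \<le> (\<Sum>i. e / 2 * (1/2)^Suc i)"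
    using summable sums_summable[OF geometric] U(3) by (intro suminf_le) (auto intro: less_imp_le)
  also have "\<dots> = e / 2" using geometric sums_unique by metis
  finally show "\<exists>V. open V \<and> (\<Union>i. A i) \<subseteq> V \<and> measure M (V - (\<Union>i. A i)) < e"
    using e U by (intro exI[of _ "\<Union>i. U i"]) auto
qed

text \<open>Only finitely many of the complements are approximated; the rest of the union is small by
  continuity from below.\<close>
lemma outer_approximable_Compl_Union:
  fixes M :: "'a::topological_space measure" and A :: "nat \<Rightarrow> 'a set"
  assumes "finite_measure M" and M: "sets M = sets borel" and A: "\<And>i. A i \<in> sets borel"
    and approx: "\<And>i. outer_approximable M (- A i)"
  shows "outer_approximable M (- (\<Union>i. A i))"
  unfolding outer_approximable_def
proof (intro allI impI)
  fix e :: real assume e: "e > 0"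
  interpret finite_measure M by fact
  have "\<exists>V. open V \<and> - A i \<subseteq> V \<and> measure M (V - - A i) < e / 4 * (1/2)^i" for i
  proof -
    have "0 < e / 4 * (1/2::real)^i" using e by simp
    then show ?thesis using approx[of i] unfolding outer_approximable_def by blast
  qed
  then obtain V where V: "\<And>i. open (V i)" "\<And>i. - A i \<subseteq> V i"
      "\<And>i. measure M (V i - - A i) < e / 4 * (1/2)^i"
    by metis
  have A_sets: "A i \<in> sets M" for i using A M by auto
  have V_sets: "V i - - A i \<in> sets M" for i using V(1) A_sets M by auto
  have "(\<lambda>n. measure M (\<Union>i<n. A i)) \<longlonglongrightarrow> measure M (\<Union>n. \<Union>i<n. A i)"
    using A_sets by (intro finite_Lim_measure_incseq) (auto simp: incseq_def intro: less_le_trans)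
  moreover have "(\<Union>n. \<Union>i<n. A i) = (\<Union>i. A i)" by auto
  ultimately have "eventually (\<lambda>n. measure M (\<Union>i. A i) - e / 2 < measure M (\<Union>i<n. A i)) sequentially"
    using e by (intro order_tendstoD) auto
  then obtain N where N: "measure M (\<Union>i. A i) - e / 2 < measure M (\<Union>i<N. A i)"
    by (auto simp: eventually_sequentially)
  have tail: "measure M ((\<Union>i. A i) - (\<Union>i<N. A i)) < e / 2"
    using N A_sets by (subst finite_measure_Diff) auto
  define W where "W = (\<Inter>i<N. V i)"
  have "measure M (W - - (\<Union>i. A i))
      \<le> measure M (((\<Union>i. A i) - (\<Union>i<N. A i)) \<union> (\<Union>i<N. V i - - A i))"
    unfolding W_def using V_sets A_sets by (intro finite_measure_mono) auto
  also have "\<dots> \<le> measure M ((\<Union>i. A i) - (\<Union>i<N. A i)) + measure M (\<Union>i<N. V i - - A i)"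
    using V_sets A_sets by (intro measure_Un_le) auto
  also have "measure M (\<Union>i<N. V i - - A i) \<le> (\<Sum>i<N. measure M (V i - - A i))"
    using V_sets by (intro finite_measure_subadditive_finite) auto
  also have "\<dots> \<le> (\<Sum>i<N. e / 4 * (1/2)^i)"
    using V(3) by (intro sum_mono less_imp_le) auto
  also have "\<dots> = e / 4 * (\<Sum>i<N. (1/2)^i)" by (simp add: sum_distrib_left)
  also have "\<dots> = e / 2 * (1 - (1/2)^N)"
    using geometric_sum[of "1/2::real" N] by simp
  also have "\<dots> \<le> e / 2" using e by simp
  finally show "\<exists>U. open U \<and> - (\<Union>i. A i) \<subseteq> U \<and> measure M (U - - (\<Union>i. A i)) < e"
    using tail V(1,2) unfolding W_def by (intro exI[of _ W]) (auto simp: W_def subset_eq)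
qed

lemma outer_approximable_borel:
  fixes M :: "'a::metric_space measure"
  assumes M_finite: "finite_measure M" and M: "sets M = sets borel" and A: "A \<in> sets borel"
  shows "outer_approximable M A \<and> outer_approximable M (- A)"
  using A[unfolded sets_borel]
proof (induction rule: sigma_sets.induct)
  case (Basic A)
  then show ?case
    using outer_approximable_open outer_approximable_closed[OF M_finite M] by (auto simp: closed_def)
next
  case Empty
  then show ?case by (auto intro: outer_approximable_open)
next
  case (Compl A)
  then show ?case by (simp add: Compl_eq_Diff_UNIV[symmetric])
next
  case (Union A)
  have "A i \<in> sets borel" for i using Union.hyps by (simp add: sets_borel)
  then show ?case
    using Union.IH outer_approximable_Union[OF M_finite M] outer_approximable_Compl_Union[OF M_finite M] by auto
qed

lemma finite_measure_outer_regular: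
  fixes M :: "'a::metric_space measure"
  assumes M_finite: "finite_measure M" and M: "sets M = sets borel" and A: "A \<in> sets borel" and e: "e > 0"
  obtains U where "open U" "A \<subseteq> U" "measure M U \<le> measure M A + e"
proof -
  interpret finite_measure M by fact
  obtain U where U: "open U" "A \<subseteq> U" "measure M (U - A) < e"
    using outer_approximable_borel[OF M_finite M A] e unfolding outer_approximable_def by blast
  have "measure M (U - A) = measure M U - measure M A"
    using U A M by (intro finite_measure_Diff) auto
  with U that show ?thesis by simp
qed

lemma measure_le_of_open_le:
  fixes \<mu> \<nu> :: "'a::metric_space measure"
  assumes \<mu>: "finite_measure \<mu>" "sets \<mu> = sets borel" and \<nu>: "finite_measure \<nu>" "sets \<nu> = sets borel"
    and c: "0 \<le> c" and open_le: "\<And>U. open U \<Longrightarrow> measure \<mu> U \<le> c * measure \<nu> U"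
    and A: "A \<in> sets borel"
  shows "measure \<mu> A \<le> c * measure \<nu> A"
proof (rule field_le_epsilon)
  fix e :: real assume e: "0 < e"
  obtain U where U: "open U" "A \<subseteq> U" "measure \<nu> U \<le> measure \<nu> A + e / (c + 1)"
    using finite_measure_outer_regular[OF \<nu> A, of "e / (c + 1)"] e c by auto
  have "measure \<mu> A \<le> measure \<mu> U"
    using U \<mu> by (intro finite_measure.finite_measure_mono) auto
  also have "\<dots> \<le> c * (measure \<nu> A + e / (c + 1))"
    using open_le[OF U(1)] U(3) c by (meson mult_left_mono order_trans)
  also have "\<dots> = c * measure \<nu> A + e * (c / (c + 1))" by (simp add: algebra_simps)
  also have "\<dots> \<le> c * measure \<nu> A + e" using e c by (simp add: field_simps)
  finally show "measure \<mu> A \<le> c * measure \<nu> A + e" .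
qed

lemma measure_open_le_of_integral_le:
  fixes \<mu> \<nu> :: "'a::metric_space measure"
  assumes \<mu>: "finite_measure \<mu>" "sets \<mu> = sets borel" and \<nu>: "finite_measure \<nu>" "sets \<nu> = sets borel"
    and integral_le: "\<And>f::'a \<Rightarrow> real. continuous_on UNIV f \<Longrightarrow> bounded (range f) \<Longrightarrow> (\<forall>x. 0 \<le> f x) \<Longrightarrow>
            (\<integral>y. f y \<partial>\<mu>) \<le> c * (\<integral>y. f y \<partial>\<nu>)"
    and U: "open U"
  shows "measure \<mu> U \<le> c * measure \<nu> U"
proof (cases "U = UNIV")
  case True
  have "(\<integral>y. 1 \<partial>\<mu>) \<le> c * (\<integral>y. 1 \<partial>\<nu>)" by (rule integral_le) auto
  moreover have "space \<mu> = UNIV" "space \<nu> = UNIV"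
    using \<mu> \<nu> by (auto dest: sets_eq_imp_space_eq)
  ultimately show ?thesis using True by simp
next
  case False
  define f where "f n y = min 1 (real n * infdist y (- U))" for n :: nat and y
  have f_cont: "continuous_on UNIV (f n)" for n unfolding f_def by (intro continuous_intros)
  have f_01: "0 \<le> f n y" "f n y \<le> 1" for n y unfolding f_def by (auto simp: infdist_nonneg)
  have f_bounded: "bounded (range (f n))" for n
    using f_01 by (intro boundedI[of _ 1]) auto
  have f_lim: "(\<lambda>n. f n y) \<longlonglongrightarrow> indicator U y" for y
  proof (cases "y \<in> U")
    case True
    have "closed (- U)" "- U \<noteq> {}" using U False by auto
    then have d: "infdist y (- U) > 0"
      using True in_closed_iff_infdist_zero[of "- U" y] infdist_nonneg[of y "- U"] by auto
    obtain N :: nat where N: "1 / infdist y (- U) < real N" using reals_Archimedean2 by blast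
    have "f n y = 1" if "n \<ge> N" for n
    proof -
      have "1 < real N * infdist y (- U)" using N d by (simp add: field_simps)
      also have "\<dots> \<le> real n * infdist y (- U)" using that d by (intro mult_right_mono) auto
      finally show ?thesis unfolding f_def by simp
    qed
    then show ?thesis using True by (intro tendsto_eventually) (auto simp: eventually_sequentially)
  next
    case False
    then show ?thesis unfolding f_def by simp
  qed
  have integral_f_lim: "(\<lambda>n. \<integral>y. f n y \<partial>M) \<longlonglongrightarrow> measure M U"
    if M: "finite_measure M" "sets M = sets borel" for M
  proof -
    interpret finite_measure M by fact
    have M_measurable: "borel_measurable M = (borel_measurable borel :: ('a \<Rightarrow> real) set)"
      using M(2) by (rule measurable_cong_sets) auto
    have "(\<lambda>n. \<integral>y. f n y \<partial>M) \<longlonglongrightarrow> (\<integral>y. indicator U y \<partial>M)"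
    proof (rule integral_dominated_convergence[where w="\<lambda>_. 1"])
      show "(indicator U :: 'a \<Rightarrow> real) \<in> borel_measurable M"
        unfolding M_measurable using U by (intro borel_measurable_indicator) auto
      show "f n \<in> borel_measurable M" for n
        unfolding M_measurable using f_cont by (rule borel_measurable_continuous_onI)
    qed (use f_lim f_01 in auto)
    then show ?thesis using sets_eq_imp_space_eq[OF M(2)] by simp
  qed
  show ?thesis
    using integral_f_lim[OF \<mu>] tendsto_mult_left[OF integral_f_lim[OF \<nu>], of c]
      integral_le[OF f_cont f_bounded] f_01
    by (intro LIMSEQ_le) auto
qed

lemma measure_le_of_integral_le:
  fixes \<mu> \<nu> :: "'a::metric_space measure"
  assumes \<mu>: "finite_measure \<mu>" "sets \<mu> = sets borel" and \<nu>: "finite_measure \<nu>" "sets \<nu> = sets borel"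
    and c: "0 \<le> c"
    and integral_le: "\<And>f::'a \<Rightarrow> real. continuous_on UNIV f \<Longrightarrow> bounded (range f) \<Longrightarrow> (\<forall>x. 0 \<le> f x) \<Longrightarrow>
            (\<integral>y. f y \<partial>\<mu>) \<le> c * (\<integral>y. f y \<partial>\<nu>)"
    and A: "A \<in> sets borel"
  shows "measure \<mu> A \<le> c * measure \<nu> A"
  using measure_open_le_of_integral_le[OF \<mu> \<nu> integral_le]
  by (rule measure_le_of_open_le[OF \<mu> \<nu> c _ A])

section \<open>Multiplicative functions on the half-line\<close>

lemma additive_nonpos_linear:
  fixes b :: "real \<Rightarrow> real"
  assumes add: "\<And>s t. 0 \<le> s \<Longrightarrow> 0 \<le> t \<Longrightarrow> b (s + t) = b s + b t"
    and nonpos: "\<And>t. 0 \<le> t \<Longrightarrow> b t \<le> 0"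
    and t: "0 \<le> t"
  shows "b t = t * b 1"
proof -
  have antimono: "b y \<le> b x" if "0 \<le> x" "x \<le> y" for x y
    using add[of x "y - x"] nonpos[of "y - x"] that by simp
  have nat_mult: "b (real n * x) = real n * b x" if "0 \<le> x" for n x
  proof (induction n)
    case 0
    show ?case using add[of 0 0] by simp
  next
    case (Suc n)
    have "b (real (Suc n) * x) = b (real n * x + x)" by (simp add: algebra_simps)
    also have "\<dots> = b (real n * x) + b x" using that by (intro add) auto
    finally show ?case using Suc by (simp add: algebra_simps)
  qed
  have fraction: "b (real k / real n) = real k / real n * b 1" if "n > 0" for k n
  proof -
    have "b 1 = real n * b (1 / real n)"
      using nat_mult[of "1 / real n" n] that by simp
    then show ?thesis
      using nat_mult[of "1 / real n" k] that by (simp add: field_simps)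
  qed
  have b1: "b 1 \<le> 0" using nonpos by simp
  have bound: "\<bar>b t - t * b 1\<bar> \<le> - b 1 / real n" if n: "n > 0" for n :: nat
  proof -
    define k where "k = nat \<lfloor>real n * t\<rfloor>"
    have k_le: "real k / real n \<le> t"
      using n t by (simp add: k_def pos_divide_le_eq mult.commute)
    have le_k1: "t \<le> real (k + 1) / real n"
      using n t by (simp add: k_def pos_le_divide_eq mult.commute) linarith
    have "t - 1 / real n \<le> real k / real n"
      using le_k1 by (simp add: add_divide_distrib)
    then have "real k / real n * b 1 \<le> (t - 1 / real n) * b 1"
      using b1 by (intro mult_right_mono_neg)
    then have upper: "b t \<le> (t - 1 / real n) * b 1"
      using antimono[of "real k / real n" t] k_le fraction[OF n] by simp
    have "real (k + 1) / real n \<le> t + 1 / real n"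
      using k_le by (simp add: add_divide_distrib)
    then have "(t + 1 / real n) * b 1 \<le> real (k + 1) / real n * b 1"
      using b1 by (intro mult_right_mono_neg)
    also have "\<dots> = b (real (k + 1) / real n)" by (rule fraction[OF n, symmetric])
    also have "\<dots> \<le> b t" using antimono le_k1 t by simp
    finally show ?thesis using upper by (simp add: algebra_simps abs_le_iff)
  qed
  have "(\<lambda>n. - b 1 / real n) \<longlonglongrightarrow> 0" by (rule lim_const_over_n)
  then have "\<bar>b t - t * b 1\<bar> \<le> 0"
    using bound by (intro LIMSEQ_le_const) (auto intro!: exI[of _ 1])
  then show ?thesis by simp
qed

lemma multiplicative_eq_powr:
  fixes a :: "real \<Rightarrow> real"
  assumes mult: "\<And>s t. 0 \<le> s \<Longrightarrow> 0 \<le> t \<Longrightarrow> a (s + t) = a s * a t"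
    and pos: "\<And>t. 0 \<le> t \<Longrightarrow> 0 < a t" and le_1: "\<And>t. 0 \<le> t \<Longrightarrow> a t \<le> 1"
    and t: "0 \<le> t"
  shows "a t = a 1 powr t"
proof -
  have "ln (a t) = t * ln (a 1)"
  proof (rule additive_nonpos_linear[where b="\<lambda>t. ln (a t)", OF _ _ t])
    show "ln (a (s + t)) = ln (a s) + ln (a t)" if "0 \<le> s" "0 \<le> t" for s t
      using that pos[of s] pos[of t] by (simp add: mult ln_mult)
  qed (simp add: pos le_1)
  then have "a t = exp (t * ln (a 1))" using pos[OF t] by (metis exp_ln)
  then show ?thesis using pos[of 1] by (simp add: powr_def)
qed

section \<open>Reversed kernels and the reverse anti-Dobrushin bound\<close>

lemma emeasure_joint_Times:
  fixes \<pi> :: "'a::topological_space measure"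
  assumes K: "K \<in> borel \<rightarrow>\<^sub>M subprob_algebra borel" and \<pi>: "sets \<pi> = sets borel"
    and A: "A \<in> sets borel" and B: "B \<in> sets borel"
  shows "emeasure (joint \<pi> K) (B \<times> A) = (\<integral>\<^sup>+x. indicator B x * emeasure (K x) A \<partial>\<pi>)"
proof -
  have space_\<pi>: "space \<pi> = UNIV" using sets_eq_imp_space_eq[OF \<pi>] by simp
  have "(\<lambda>(x, y). (x, y)) \<in> (\<pi> \<Otimes>\<^sub>M borel) \<rightarrow>\<^sub>M (borel \<Otimes>\<^sub>M borel)"
    using \<pi> by (subst measurable_cong_sets[OF sets_pair_measure_cong refl]) (auto simp: case_prod_beta)
  moreover have "K \<in> \<pi> \<rightarrow>\<^sub>M subprob_algebra borel"
    using K by (subst measurable_cong_sets[OF \<pi> refl])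
  ultimately have D: "(\<lambda>x. distr (K x) (borel \<Otimes>\<^sub>M borel) (Pair x)) \<in> \<pi> \<rightarrow>\<^sub>M subprob_algebra (borel \<Otimes>\<^sub>M borel)"
    by (rule measurable_distr2[where f=Pair])
  have BA: "B \<times> A \<in> sets (borel \<Otimes>\<^sub>M borel)" using A B by auto
  have "emeasure (joint \<pi> K) (B \<times> A) = (\<integral>\<^sup>+x. emeasure (distr (K x) (borel \<Otimes>\<^sub>M borel) (Pair x)) (B \<times> A) \<partial>\<pi>)"
    unfolding joint_def using D BA by (intro emeasure_bind) (auto simp: space_\<pi>)
  also have "\<dots> = (\<integral>\<^sup>+x. indicator B x * emeasure (K x) A \<partial>\<pi>)"
  proof (rule nn_integral_cong)
    fix x
    have sets_K: "sets (K x) = sets borel" using subprob_measurableD(2)[OF K] by simp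
    have "Pair x \<in> K x \<rightarrow>\<^sub>M (borel \<Otimes>\<^sub>M borel)"
      by (subst measurable_cong_sets[OF sets_K refl]) simp
    then have "emeasure (distr (K x) (borel \<Otimes>\<^sub>M borel) (Pair x)) (B \<times> A)
        = emeasure (K x) (Pair x -` (B \<times> A) \<inter> space (K x))"
      using BA by (rule emeasure_distr)
    also have "Pair x -` (B \<times> A) \<inter> space (K x) = (if x \<in> B then A else {})"
      using sets_eq_imp_space_eq[OF sets_K] by auto
    finally show "emeasure (distr (K x) (borel \<Otimes>\<^sub>M borel) (Pair x)) (B \<times> A) = indicator B x * emeasure (K x) A"
      by simp
  qed
  finally show ?thesis .
qed

lemma emeasure_distr_swap_Times:
  fixes J :: "('a::topological_space \<times> 'a) measure"
  assumes J: "sets J = sets (borel \<Otimes>\<^sub>M borel)" and A: "A \<in> sets borel" and B: "B \<in> sets borel"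
  shows "emeasure (distr J (borel \<Otimes>\<^sub>M borel) prod.swap) (B \<times> A) = emeasure J (A \<times> B)"
proof -
  have "(\<lambda>(x::'a, y::'a). (y, x)) \<in> J \<rightarrow>\<^sub>M (borel \<Otimes>\<^sub>M borel)"
    by (subst measurable_cong_sets[OF J refl]) (rule measurable_pair_swap')
  moreover have "prod.swap = (\<lambda>(x::'a, y::'a). (y, x))" by (auto simp: fun_eq_iff)
  ultimately have "prod.swap \<in> J \<rightarrow>\<^sub>M (borel \<Otimes>\<^sub>M borel)" by simp
  then have "emeasure (distr J (borel \<Otimes>\<^sub>M borel) prod.swap) (B \<times> A) = emeasure J (prod.swap -` (B \<times> A) \<inter> space J)"
    using A B by (intro emeasure_distr) auto
  also have "prod.swap -` (B \<times> A) \<inter> space J = A \<times> B"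
    using sets_eq_imp_space_eq[OF J] by (auto simp: space_pair_measure)
  finally show ?thesis .
qed

lemma nn_integral_kernel_reversal:
  fixes \<pi> :: "'a::topological_space measure"
  assumes K: "K \<in> borel \<rightarrow>\<^sub>M subprob_algebra borel" and R: "R \<in> borel \<rightarrow>\<^sub>M subprob_algebra borel"
    and \<pi>: "sets \<pi> = sets borel"
    and reversal: "joint \<pi> K = distr (joint \<pi> R) (borel \<Otimes>\<^sub>M borel) prod.swap"
    and A: "A \<in> sets borel" and B: "B \<in> sets borel"
  shows "(\<integral>\<^sup>+x. indicator B x * emeasure (K x) A \<partial>\<pi>) = (\<integral>\<^sup>+y. indicator A y * emeasure (R y) B \<partial>\<pi>)"
proof -
  have sets_joint: "sets (joint \<pi> R) = sets (borel \<Otimes>\<^sub>M borel)"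
    unfolding joint_def using sets_eq_imp_space_eq[OF \<pi>]
    by (subst sets_bind[where N="borel \<Otimes>\<^sub>M borel"]) auto
  have "(\<integral>\<^sup>+x. indicator B x * emeasure (K x) A \<partial>\<pi>) = emeasure (joint \<pi> K) (B \<times> A)"
    by (rule emeasure_joint_Times[OF K \<pi> A B, symmetric])
  also have "\<dots> = emeasure (joint \<pi> R) (A \<times> B)"
    unfolding reversal by (rule emeasure_distr_swap_Times[OF sets_joint A B])
  also have "\<dots> = (\<integral>\<^sup>+y. indicator A y * emeasure (R y) B \<partial>\<pi>)"
    by (rule emeasure_joint_Times[OF R \<pi> B A])
  finally show ?thesis .
qed

lemma RaD_constant_nonneg:
  fixes \<pi> :: "'a::topological_space measure"
  assumes \<pi>: "prob_space \<pi>" "sets \<pi> = sets borel"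
    and R: "R \<in> borel \<rightarrow>\<^sub>M subprob_algebra borel"
    and R_bound: "AE y in \<pi>. \<forall>A\<in>sets borel. measure (R y) A \<le> C * measure (R y) UNIV * measure \<pi> A"
    and R_mass: "0 < (\<integral>\<^sup>+y. emeasure (R y) UNIV \<partial>\<pi>)"
  shows "0 \<le> C"
proof (rule ccontr)
  assume "\<not> 0 \<le> C"
  interpret prob_space \<pi> by fact
  have "measure \<pi> UNIV = 1" using prob_space sets_eq_imp_space_eq[OF \<pi>(2)] by simp
  have "AE y in \<pi>. measure (R y) UNIV \<le> C * measure (R y) UNIV"
    using R_bound
  proof eventually_elim
    case (elim y)
    then show ?case using bspec[OF elim space_in_borel] \<open>measure \<pi> UNIV = 1\<close> by simp
  qed
  then have "AE y in \<pi>. emeasure (R y) UNIV = 0"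
  proof eventually_elim
    case (elim y)
    have "C * measure (R y) UNIV \<le> 0"
      using \<open>\<not> 0 \<le> C\<close> by (simp add: mult_nonpos_nonneg)
    with elim have "measure (R y) UNIV = 0"
      using measure_nonneg[of "R y" UNIV] by linarith
    moreover have "emeasure (R y) UNIV \<noteq> \<infinity>"
      using measurable_space[OF R, of y] subprob_space.emeasure_subprob_space_less_top
      by (auto simp: space_subprob_algebra)
    ultimately show "emeasure (R y) UNIV = 0" by (simp add: emeasure_eq_ennreal_measure)
  qed
  then have "(\<integral>\<^sup>+y. emeasure (R y) UNIV \<partial>\<pi>) = (\<integral>\<^sup>+y. 0 \<partial>\<pi>)"
    by (rule nn_integral_cong_AE)
  with R_mass show False by simp
qed

lemma RaD_rect_bound:
  fixes \<pi> :: "'a::topological_space measure"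
  assumes K: "K \<in> borel \<rightarrow>\<^sub>M subprob_algebra borel" and R: "R \<in> borel \<rightarrow>\<^sub>M subprob_algebra borel"
    and \<pi>: "finite_measure \<pi>" "sets \<pi> = sets borel"
    and reversal: "joint \<pi> K = distr (joint \<pi> R) (borel \<Otimes>\<^sub>M borel) prod.swap"
    and survival: "\<And>A. A \<in> sets borel \<Longrightarrow> (\<integral>\<^sup>+x. emeasure (K x) A \<partial>\<pi>) = ennreal (a * measure \<pi> A)"
    and R_bound: "AE y in \<pi>. \<forall>A\<in>sets borel. measure (R y) A \<le> C * measure (R y) UNIV * measure \<pi> A"
    and a: "0 \<le> a" and C: "0 \<le> C"
    and A: "A \<in> sets borel" and B: "B \<in> sets borel"
  shows "(\<integral>\<^sup>+x. indicator B x * emeasure (K x) A \<partial>\<pi>) \<le> ennreal (a * C * measure \<pi> B) * emeasure \<pi> A"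
proof -
  have R_finite: "emeasure (R y) S = ennreal (measure (R y) S)" for y S
    using measurable_space[OF R, of y]
    by (simp add: space_subprob_algebra subprob_space.axioms finite_measure.emeasure_eq_measure)
  have "(\<integral>\<^sup>+x. indicator B x * emeasure (K x) A \<partial>\<pi>) = (\<integral>\<^sup>+y. indicator A y * emeasure (R y) B \<partial>\<pi>)"
    by (rule nn_integral_kernel_reversal[OF K R \<pi>(2) reversal A B])
  also have "\<dots> \<le> (\<integral>\<^sup>+y. ennreal (C * measure \<pi> B) * (indicator A y * emeasure (R y) UNIV) \<partial>\<pi>)"
    using R_bound
  proof (rule nn_integral_mono_AE[OF AE_mp], intro AE_I2 impI)
    fix y assume "\<forall>S\<in>sets borel. measure (R y) S \<le> C * measure (R y) UNIV * measure \<pi> S"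
    then have "ennreal (measure (R y) B) \<le> ennreal (C * measure \<pi> B * measure (R y) UNIV)"
      using B by (intro ennreal_leI) (simp add: ac_simps)
    then show "indicator A y * emeasure (R y) B \<le> ennreal (C * measure \<pi> B) * (indicator A y * emeasure (R y) UNIV)"
      using C by (simp add: R_finite ennreal_mult indicator_def)
  qed
  also have "\<dots> = ennreal (C * measure \<pi> B) * (\<integral>\<^sup>+y. indicator A y * emeasure (R y) UNIV \<partial>\<pi>)"
  proof (rule nn_integral_cmult)
    have "(\<lambda>y. emeasure (R y) UNIV) \<in> borel_measurable borel"
      using measurable_compose[OF R measurable_emeasure_subprob_algebra] by simp
    then show "(\<lambda>y. indicator A y * emeasure (R y) UNIV) \<in> borel_measurable \<pi>"
      using A by (simp add: measurable_cong_sets[OF \<pi>(2) refl])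
  qed
  also have "(\<integral>\<^sup>+y. indicator A y * emeasure (R y) UNIV \<partial>\<pi>) = (\<integral>\<^sup>+x. emeasure (K x) A \<partial>\<pi>)"
    using nn_integral_kernel_reversal[OF K R \<pi>(2) reversal A space_in_borel] by simp
  also have "ennreal (C * measure \<pi> B) * \<dots> = ennreal (a * C * measure \<pi> B) * emeasure \<pi> A"
    using a C by (simp add: survival[OF A] finite_measure.emeasure_eq_measure[OF \<pi>(1)] ennreal_mult[symmetric] ac_simps)
  finally show ?thesis .
qed

section \<open>Pointwise bounds from averaged bounds\<close>

lemma lsc_le_of_set_nn_integral_le:
  fixes g :: "'a::topological_space \<Rightarrow> real"
  assumes \<pi>: "finite_measure \<pi>" "sets \<pi> = sets borel" and support: "spt \<pi> = UNIV"
    and g: "lsc_fun g" and C: "0 \<le> C"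
    and set_integral_le: "\<And>B. open B \<Longrightarrow> (\<integral>\<^sup>+z. indicator B z * ennreal (g z) \<partial>\<pi>) \<le> ennreal C * emeasure \<pi> B"
  shows "g x \<le> C"
proof (rule ccontr)
  assume "\<not> g x \<le> C"
  define e where "e = (g x - C) / 2"
  have e: "0 < e" using \<open>\<not> g x \<le> C\<close> by (simp add: e_def)
  define B where "B = {z. C + e < g z}"
  have B: "open B" using g unfolding B_def lsc_fun_def by blast
  have "x \<in> B" using \<open>\<not> g x \<le> C\<close> by (simp add: B_def e_def field_simps)
  with B support have B_pos: "0 < measure \<pi> B"
    unfolding spt_def by (auto simp: finite_measure.emeasure_eq_measure[OF \<pi>(1)])
  have "ennreal (C + e) * emeasure \<pi> B = (\<integral>\<^sup>+z. ennreal (C + e) * indicator B z \<partial>\<pi>)"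
    using B \<pi>(2) by (simp add: nn_integral_cmult_indicator)
  also have "\<dots> \<le> (\<integral>\<^sup>+z. indicator B z * ennreal (g z) \<partial>\<pi>)"
    by (intro nn_integral_mono) (auto simp: B_def indicator_def intro: ennreal_leI)
  also have "\<dots> \<le> ennreal C * emeasure \<pi> B" by (rule set_integral_le[OF B])
  finally have "ennreal ((C + e) * measure \<pi> B) \<le> ennreal (C * measure \<pi> B)"
    using C e by (simp only: finite_measure.emeasure_eq_measure[OF \<pi>(1)] ennreal_mult measure_nonneg add_nonneg_nonneg less_imp_le)
  then have "(C + e) * measure \<pi> B \<le> C * measure \<pi> B"
    using C by (simp add: ennreal_le_iff)
  with e B_pos show False by (simp add: algebra_simps mult_le_0_iff)
qed

text \<open>The hypothesis says that \<pi> restricted to B and pushed forward by K is dominated by r \<pi>.\<close>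
lemma nn_integral_kernel_restrict_le:
  fixes \<pi> :: "'a::topological_space measure" and f :: "'a \<Rightarrow> ennreal"
  assumes K: "K \<in> borel \<rightarrow>\<^sub>M subprob_algebra borel" and \<pi>: "sets \<pi> = sets borel"
    and f: "f \<in> borel_measurable borel" and B: "B \<in> sets borel"
    and le: "\<And>A. A \<in> sets borel \<Longrightarrow> (\<integral>\<^sup>+x. indicator B x * emeasure (K x) A \<partial>\<pi>) \<le> r * emeasure \<pi> A"
  shows "(\<integral>\<^sup>+x. indicator B x * (\<integral>\<^sup>+y. f y \<partial>K x) \<partial>\<pi>) \<le> r * (\<integral>\<^sup>+y. f y \<partial>\<pi>)"
proof -
  define D where "D = density \<pi> (indicator B)"
  have sets_D: "sets D = sets borel" unfolding D_def using \<pi> by simp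
  have space_D: "space D = UNIV" using sets_eq_imp_space_eq[OF sets_D] by simp
  have indicator_B: "(indicator B :: 'a \<Rightarrow> ennreal) \<in> borel_measurable \<pi>"
    using B \<pi> by simp
  have K_\<pi>: "K \<in> \<pi> \<rightarrow>\<^sub>M subprob_algebra borel" and K_D: "K \<in> D \<rightarrow>\<^sub>M subprob_algebra borel"
    using K by (simp_all add: measurable_cong_sets[OF \<pi> refl] measurable_cong_sets[OF sets_D refl])
  have bind_sets: "sets (D \<bind> K) = sets borel"
    using K_D space_D by (subst sets_bind[where N=borel]) (auto dest: subprob_measurableD(2))
  have bind_le: "D \<bind> K \<le> scale_measure r \<pi>"
  proof (subst le_measure)
    show "sets (D \<bind> K) = sets (scale_measure r \<pi>)" using bind_sets \<pi> by simp
    show "\<forall>A\<in>sets (D \<bind> K). emeasure (D \<bind> K) A \<le> emeasure (scale_measure r \<pi>) A"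
    proof
      fix A assume "A \<in> sets (D \<bind> K)"
      then have A: "A \<in> sets borel" using bind_sets by simp
      have "emeasure (D \<bind> K) A = (\<integral>\<^sup>+x. emeasure (K x) A \<partial>D)"
        using K_D A space_D by (intro emeasure_bind) auto
      also have "\<dots> = (\<integral>\<^sup>+x. indicator B x * emeasure (K x) A \<partial>\<pi>)"
        unfolding D_def
        using indicator_B measurable_compose[OF K_\<pi> measurable_emeasure_subprob_algebra[OF A]]
        by (rule nn_integral_density)
      also have "\<dots> \<le> r * emeasure \<pi> A" by (rule le[OF A])
      finally show "emeasure (D \<bind> K) A \<le> emeasure (scale_measure r \<pi>) A" by simp
    qed
  qed
  have "(\<integral>\<^sup>+x. indicator B x * (\<integral>\<^sup>+y. f y \<partial>K x) \<partial>\<pi>) = (\<integral>\<^sup>+x. (\<integral>\<^sup>+y. f y \<partial>K x) \<partial>D)"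
    unfolding D_def
    using indicator_B measurable_compose[OF K_\<pi> nn_integral_measurable_subprob_algebra[OF f]]
    by (rule nn_integral_density[symmetric])
  also have "\<dots> = (\<integral>\<^sup>+y. f y \<partial>(D \<bind> K))"
    by (rule nn_integral_bind[OF f K_D, symmetric])
  also have "\<dots> \<le> (\<integral>\<^sup>+y. f y \<partial>scale_measure r \<pi>)"
    using bind_le bind_sets \<pi> by (intro nn_integral_mono_measure) auto
  also have "\<dots> = r * (\<integral>\<^sup>+y. f y \<partial>\<pi>)"
    using f by (intro nn_integral_scale_measure) (simp add: measurable_cong_sets[OF \<pi> refl])
  finally show ?thesis .
qed

lemma nn_integral_eq_integral_bounded:
  fixes f :: "'a::topological_space \<Rightarrow> real"
  assumes M: "finite_measure M" "sets M = sets borel"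
    and f: "continuous_on UNIV f" "bounded (range f)" "\<forall>x. 0 \<le> f x"
  shows "(\<integral>\<^sup>+y. ennreal (f y) \<partial>M) = ennreal (\<integral>y. f y \<partial>M)"
proof -
  interpret finite_measure M by fact
  obtain b where "\<And>y. norm (f y) \<le> b" using f(2) unfolding bounded_iff by auto
  moreover have "f \<in> borel_measurable M"
    using borel_measurable_continuous_onI[OF f(1)] by (simp add: measurable_cong_sets[OF M(2) refl])
  ultimately show ?thesis
    using f(3) by (intro nn_integral_eq_integral integrable_const_bound[where B=b]) auto
qed

text \<open>The lower semicontinuity of K f turns the bound on \<pi>-averages of K f over open sets into
  a pointwise bound, which then passes from continuous functions to all Borel sets.\<close>
lemma kernel_measure_le_of_rect_bound:
  fixes K :: "'a::metric_space \<Rightarrow> 'a measure"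
  assumes K: "K \<in> borel \<rightarrow>\<^sub>M subprob_algebra borel" and lsc: "lsc_kernel K"
    and \<pi>: "finite_measure \<pi>" "sets \<pi> = sets borel" and support: "spt \<pi> = UNIV" and c: "0 \<le> c"
    and rect: "\<And>A B. A \<in> sets borel \<Longrightarrow> B \<in> sets borel \<Longrightarrow>
      (\<integral>\<^sup>+x. indicator B x * emeasure (K x) A \<partial>\<pi>) \<le> ennreal (c * measure \<pi> B) * emeasure \<pi> A"
    and A: "A \<in> sets borel"
  shows "measure (K x) A \<le> c * measure \<pi> A"
proof -
  have K_x: "finite_measure (K z)" "sets (K z) = sets borel" for z
    using measurable_space[OF K, of z] subprob_measurableD(2)[OF K]
    by (auto simp: space_subprob_algebra subprob_space.axioms)
  have "(\<integral>y. f y \<partial>K x) \<le> c * (\<integral>y. f y \<partial>\<pi>)"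
    if f: "continuous_on UNIV f" "bounded (range f)" "\<forall>x. 0 \<le> f x" for f :: "'a \<Rightarrow> real"
  proof (rule lsc_le_of_set_nn_integral_le[OF \<pi> support])
    show "lsc_fun (\<lambda>z. \<integral>y. f y \<partial>K z)" using lsc f unfolding lsc_kernel_def by blast
    show "0 \<le> c * (\<integral>y. f y \<partial>\<pi>)" using c f(3) by simp
    have f_measurable: "(\<lambda>y. ennreal (f y)) \<in> borel_measurable borel"
      using borel_measurable_continuous_onI[OF f(1)] by simp
    fix B :: "'a set" assume "open B"
    have "(\<integral>\<^sup>+z. indicator B z * ennreal (\<integral>y. f y \<partial>K z) \<partial>\<pi>)
        = (\<integral>\<^sup>+z. indicator B z * (\<integral>\<^sup>+y. ennreal (f y) \<partial>K z) \<partial>\<pi>)"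
      using nn_integral_eq_integral_bounded[OF K_x f] by simp
    also have "\<dots> \<le> ennreal (c * measure \<pi> B) * (\<integral>\<^sup>+y. ennreal (f y) \<partial>\<pi>)"
      using \<open>open B\<close> rect by (intro nn_integral_kernel_restrict_le[OF K \<pi>(2) f_measurable]) auto
    also have "\<dots> = ennreal (c * (\<integral>y. f y \<partial>\<pi>)) * emeasure \<pi> B"
      using c f(3) nn_integral_eq_integral_bounded[OF \<pi> f]
      by (simp add: finite_measure.emeasure_eq_measure[OF \<pi>(1)] ennreal_mult[symmetric] ac_simps)
    finally show "(\<integral>\<^sup>+z. indicator B z * ennreal (\<integral>y. f y \<partial>K z) \<partial>\<pi>)
        \<le> ennreal (c * (\<integral>y. f y \<partial>\<pi>)) * emeasure \<pi> B" .
  qed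
  then show ?thesis by (rule measure_le_of_integral_le[OF K_x \<pi> c _ A])
qed

section \<open>Quasi-stationary distributions\<close>

locale qsd_semigroup =
  fixes T :: "real set" and P :: "real \<Rightarrow> 'a::topological_space \<Rightarrow> 'a measure" and \<pi> :: "'a measure"
  assumes time: "T = range real \<or> T = {0..}"
    and semigroup: "submarkov_semigroup T P"
    and qsd: "is_QSD T P \<pi>"
begin

lemma zero_in_time: "0 \<in> T"
  using time by (auto intro: range_eqI[of _ _ 0])

lemma one_in_time: "1 \<in> T"
  using time by (auto intro: range_eqI[of _ _ 1])

lemma add_in_time: "s \<in> T \<Longrightarrow> t \<in> T \<Longrightarrow> s + t \<in> T"
  using time by (auto simp flip: of_nat_add)

lemma sets_\<pi>: "sets \<pi> = sets borel" and prob_space_\<pi>: "prob_space \<pi>"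
  using qsd by (auto simp: is_QSD_def)

lemma finite_measure_\<pi>: "finite_measure \<pi>"
  using prob_space_\<pi> by (rule prob_space.finite_measure)

lemma space_\<pi>: "space \<pi> = UNIV"
  using sets_eq_imp_space_eq[OF sets_\<pi>] by simp

lemma measure_\<pi>_UNIV: "measure \<pi> UNIV = 1"
  using prob_space.prob_space[OF prob_space_\<pi>] by (simp add: space_\<pi>)

lemma measurable_P: "t \<in> T \<Longrightarrow> P t \<in> borel \<rightarrow>\<^sub>M subprob_algebra borel"
  using semigroup unfolding submarkov_semigroup_def by blast

lemma P_add: "s \<in> T \<Longrightarrow> t \<in> T \<Longrightarrow> P (s + t) x = P s x \<bind> P t"
  using semigroup unfolding submarkov_semigroup_def by blast

lemma measurable_P_\<pi>: "t \<in> T \<Longrightarrow> P t \<in> \<pi> \<rightarrow>\<^sub>M subprob_algebra borel"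
  using measurable_P by (simp add: measurable_cong_sets[OF sets_\<pi> refl])

lemma sets_P: "t \<in> T \<Longrightarrow> sets (P t x) = sets borel"
  using subprob_measurableD(2)[OF measurable_P] by simp

lemma subprob_space_P: "t \<in> T \<Longrightarrow> subprob_space (P t x)"
  using measurable_space[OF measurable_P, of t x] by (simp add: space_subprob_algebra)

definition survival :: "real \<Rightarrow> real" where
  "survival t = (\<integral>x. measure (P t x) UNIV \<partial>\<pi>)"

lemma survival_pos: "t \<in> T \<Longrightarrow> 0 < survival t"
  using qsd unfolding is_QSD_def survival_def by blast

lemma integral_measure_P:
  assumes "t \<in> T" "A \<in> sets borel"
  shows "(\<integral>x. measure (P t x) A \<partial>\<pi>) = survival t * measure \<pi> A"
proof -
  have "(\<integral>x. measure (P t x) A \<partial>\<pi>) / survival t = measure \<pi> A"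
    using qsd assms unfolding is_QSD_def survival_def by blast
  then show ?thesis using survival_pos[OF assms(1)] by (simp add: field_simps)
qed

lemma nn_integral_emeasure_P:
  assumes t: "t \<in> T" and A: "A \<in> sets borel"
  shows "(\<integral>\<^sup>+x. emeasure (P t x) A \<partial>\<pi>) = ennreal (survival t * measure \<pi> A)"
proof -
  have "(\<integral>\<^sup>+x. emeasure (P t x) A \<partial>\<pi>) = (\<integral>\<^sup>+x. ennreal (measure (P t x) A) \<partial>\<pi>)"
    using subprob_space_P[OF t] by (simp add: subprob_space.axioms finite_measure.emeasure_eq_measure)
  also have "\<dots> = ennreal (\<integral>x. measure (P t x) A \<partial>\<pi>)"
  proof (intro nn_integral_eq_integral finite_measure.integrable_const_bound[where B=1])
    show "finite_measure \<pi>" by (rule finite_measure_\<pi>)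
    show "(\<lambda>x. measure (P t x) A) \<in> borel_measurable \<pi>"
      using measurable_compose[OF measurable_P_\<pi>[OF t] measurable_measure_subprob_algebra[OF A]] .
  qed (use subprob_space_P[OF t] subprob_space.subprob_measure_le_1 in auto)
  finally show ?thesis using integral_measure_P[OF t A] by simp
qed

lemma survival_le_1:
  assumes t: "t \<in> T" shows "survival t \<le> 1"
proof -
  interpret subprob_space \<pi> using prob_space_\<pi> by (rule prob_space_imp_subprob_space)
  have "(\<integral>\<^sup>+x. emeasure (P t x) UNIV \<partial>\<pi>) \<le> 1"
    using subprob_space_P[OF t] subprob_space.subprob_emeasure_le_1 by (intro nn_integral_le_const) auto
  then have "ennreal (survival t * measure \<pi> UNIV) \<le> 1"
    by (simp add: nn_integral_emeasure_P[OF t])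
  then show ?thesis
    using survival_pos[OF t] by (simp add: measure_\<pi>_UNIV)
qed

lemma bind_QSD: "t \<in> T \<Longrightarrow> \<pi> \<bind> P t = scale_measure (survival t) \<pi>"
proof (rule measure_eqI)
  assume t: "t \<in> T"
  show sets_eq: "sets (\<pi> \<bind> P t) = sets (scale_measure (survival t) \<pi>)"
    using sets_P[OF t] sets_\<pi> by (subst sets_bind[where N=borel]) (auto simp: space_\<pi>)
  fix A assume "A \<in> sets (\<pi> \<bind> P t)"
  then have A: "A \<in> sets borel" using sets_eq sets_\<pi> by simp
  have "emeasure (\<pi> \<bind> P t) A = (\<integral>\<^sup>+x. emeasure (P t x) A \<partial>\<pi>)"
    using measurable_P_\<pi>[OF t] A by (intro emeasure_bind) (auto simp: space_\<pi>)
  also have "\<dots> = ennreal (survival t) * emeasure \<pi> A"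
    using survival_pos[OF t] finite_measure_\<pi>
    by (simp add: nn_integral_emeasure_P[OF t A] finite_measure.emeasure_eq_measure ennreal_mult)
  finally show "emeasure (\<pi> \<bind> P t) A = emeasure (scale_measure (survival t) \<pi>) A" by simp
qed

lemma survival_add:
  assumes s: "s \<in> T" and t: "t \<in> T"
  shows "survival (s + t) = survival s * survival t"
proof -
  have mass_measurable: "(\<lambda>y. emeasure (P t y) UNIV) \<in> borel_measurable borel"
    using measurable_compose[OF measurable_P[OF t] measurable_emeasure_subprob_algebra[of UNIV borel]] by simp
  have "ennreal (survival (s + t)) = (\<integral>\<^sup>+x. emeasure (P (s + t) x) UNIV \<partial>\<pi>)"
    by (simp add: nn_integral_emeasure_P add_in_time[OF s t] measure_\<pi>_UNIV)
  also have "\<dots> = (\<integral>\<^sup>+x. emeasure (P s x \<bind> P t) UNIV \<partial>\<pi>)"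
    by (simp add: P_add[OF s t])
  also have "\<dots> = (\<integral>\<^sup>+x. \<integral>\<^sup>+y. emeasure (P t y) UNIV \<partial>P s x \<partial>\<pi>)"
  proof (rule nn_integral_cong)
    fix x
    have "P t \<in> P s x \<rightarrow>\<^sub>M subprob_algebra borel"
      using measurable_P[OF t] by (simp add: measurable_cong_sets[OF sets_P[OF s] refl])
    then show "emeasure (P s x \<bind> P t) UNIV = (\<integral>\<^sup>+y. emeasure (P t y) UNIV \<partial>P s x)"
      using sets_eq_imp_space_eq[OF sets_P[OF s, of x]] by (intro emeasure_bind) auto
  qed
  also have "\<dots> = (\<integral>\<^sup>+y. emeasure (P t y) UNIV \<partial>(\<pi> \<bind> P s))"
    by (rule nn_integral_bind[OF mass_measurable measurable_P_\<pi>[OF s], symmetric])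
  also have "\<dots> = ennreal (survival s) * (\<integral>\<^sup>+y. emeasure (P t y) UNIV \<partial>\<pi>)"
    unfolding bind_QSD[OF s]
    using mass_measurable by (intro nn_integral_scale_measure) (simp add: measurable_cong_sets[OF sets_\<pi> refl])
  also have "\<dots> = ennreal (survival s * survival t)"
    using survival_pos[OF s] survival_pos[OF t]
    by (simp add: nn_integral_emeasure_P[OF t] measure_\<pi>_UNIV ennreal_mult)
  finally show ?thesis
    using survival_pos[OF s] survival_pos[OF t] survival_pos[OF add_in_time[OF s t]] by simp
qed

lemma survival_eq_powr:
  assumes t: "t \<in> T"
  shows "survival t = lambda_QSD P \<pi> powr t"
proof -
  have lambda: "lambda_QSD P \<pi> = survival 1" by (simp add: lambda_QSD_def survival_def)
  from time show ?thesis
  proof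
    assume T: "T = range real"
    then obtain n where n: "t = real n" using t by auto
    have "survival (real k) = survival 1 ^ k" for k
    proof (induction k)
      case 0
      have "survival 0 = survival 0 * survival 0"
        using survival_add[OF zero_in_time zero_in_time] by simp
      then show ?case using survival_pos[OF zero_in_time] by simp
    next
      case (Suc k)
      have "real k \<in> T" using T by simp
      then have "survival (real k + 1) = survival (real k) * survival 1"
        using survival_add one_in_time by blast
      then show ?case using Suc by (simp add: add.commute)
    qed
    then show ?thesis using n lambda survival_pos[OF one_in_time] by (simp add: powr_realpow)
  next
    assume T: "T = {0..}"
    have "survival t = survival 1 powr t"
    proof (rule multiplicative_eq_powr)
      show "survival (s + u) = survival s * survival u" if "0 \<le> s" "0 \<le> u" for s u
        using survival_add[of s u] that T by simp
      show "0 < survival s" if "0 \<le> s" for s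
        using survival_pos[of s] that T by simp
      show "survival s \<le> 1" if "0 \<le> s" for s
        using survival_le_1[of s] that T by simp
    qed (use t T in simp)
    then show ?thesis by (simp add: lambda)
  qed
qed

end

theorem mainTheorem3:
  fixes T :: "real set"
    and P :: "real \<Rightarrow> 'a::metric_space \<Rightarrow> 'a measure"
    and \<pi> :: "'a measure"
    and t\<^sub>2 C\<^sub>2' :: real
    and R :: "'a \<Rightarrow> 'a measure"
  assumes time: "T = range real \<or> T = {0..}"
    and semigroup: "submarkov_semigroup T P"
    and qsd: "is_QSD T P \<pi>"
    and t2: "t\<^sub>2 \<in> T" "0 < t\<^sub>2"
    and R_kernel: "R \<in> borel \<rightarrow>\<^sub>M subprob_algebra borel"
    and reversal: "joint \<pi> (P t\<^sub>2) = distr (joint \<pi> R) (borel \<Otimes>\<^sub>M borel) prod.swap"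
    and R_bound: "AE y in \<pi>. \<forall>A\<in>sets borel. measure (R y) A \<le> C\<^sub>2' * measure (R y) UNIV * measure \<pi> A"
    and support: "spt \<pi> = UNIV"
    and lsc: "lsc_kernel (P t\<^sub>2)"
  shows "\<forall>x. \<forall>A\<in>sets borel.
           measure (P t\<^sub>2 x) A \<le> (lambda_QSD P \<pi> powr t\<^sub>2 * C\<^sub>2') * measure \<pi> A"
proof -
  interpret qsd_semigroup T P \<pi> using time semigroup qsd by unfold_locales
  note P_kernel = measurable_P[OF t2(1)] and survival = nn_integral_emeasure_P[OF t2(1)]
  have R_mass: "(\<integral>\<^sup>+y. emeasure (R y) UNIV \<partial>\<pi>) = ennreal (survival t\<^sub>2)"
    using nn_integral_kernel_reversal[OF P_kernel R_kernel sets_\<pi> reversal space_in_borel space_in_borel]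
      survival[OF space_in_borel] by (simp add: measure_\<pi>_UNIV)
  have C: "0 \<le> C\<^sub>2'"
    using survival_pos[OF t2(1)]
    by (intro RaD_constant_nonneg[OF prob_space_\<pi> sets_\<pi> R_kernel R_bound]) (simp add: R_mass)
  have rect: "(\<integral>\<^sup>+x. indicator B x * emeasure (P t\<^sub>2 x) A \<partial>\<pi>)
      \<le> ennreal (lambda_QSD P \<pi> powr t\<^sub>2 * C\<^sub>2' * measure \<pi> B) * emeasure \<pi> A"
    if "A \<in> sets borel" "B \<in> sets borel" for A B
    unfolding survival_eq_powr[OF t2(1), symmetric]
    using RaD_rect_bound[OF P_kernel R_kernel finite_measure_\<pi> sets_\<pi> reversal survival R_bound
        less_imp_le[OF survival_pos[OF t2(1)]] C that] .
  have c: "0 \<le> lambda_QSD P \<pi> powr t\<^sub>2 * C\<^sub>2'" using C by simp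
  show ?thesis
    using kernel_measure_le_of_rect_bound[OF P_kernel lsc finite_measure_\<pi> sets_\<pi> support c rect] by blast
qed

end
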